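(* Let $(L,G,\mathcal D)$ be an abelian Chaplygin nonholonomic system as described in the context, with constraints $\phi^a(q,\dot q)=\dot s^a+A^a_\alpha(r)\dot r^\alpha=0$, $a=1,\dots,k<n$, where $q=(r,s)$. Suppose a nowhere-zero $f(r)\in C^1$ has been found satisfying $$\frac{\partial f}{\partial r^\delta}G_{\alpha\nu}+\frac{\partial f}{\partial r^\nu}G_{\alpha\delta}-2\frac{\partial f}{\partial r^\alpha}G_{\delta\nu}=f\big(K^\mu_{\alpha\delta}G_{\mu\nu}+K^\mu_{\alpha\nu}G_{\mu\delta}\big)\quad\text{for all }\alpha,\nu,\delta,$$ and let $\mathcal L(q,\omega):=L(q,\dot q=f\omega)$ and $\phi^a(q,\omega):=\phi^a(q,\dot q=f\omega)$. If the matrix $\widetilde g_{ab}:=\partial^2\mathcal L/\partial\omega^a\partial\omega^b$ (second derivatives with respect to the $s$-components of $\omega$) is invertible, then the nonholonomic mechanics of the original system can be derived from the equations $$\frac{d}{dt}\frac{\partial\mathcal L_V}{\partial\omega^I}-f\frac{\partial\mathcal L_V}{\partial q^I}=0,\qquad I=1,\dots,n,$$ with $\dot q=f\omega$, using the Lagrangian $$\mathcal L_V(q,\omega)=\mathcal L(q,\omega)-\frac1f\frac{\partial\mathcal L}{\partial\omega^a}\phi^a(q,\omega),$$ and imposing the nonholonomic constraints $\phi^a=0$ on the initial conditions.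
   Context: An abelian Chaplygin nonholonomic system: $Q$ of dimension $n$ with local coordinates $q=(r^\alpha,s^a)$, $\alpha=1,\dots,m=n-k$, $a=1,\dots,k$, a mechanical Lagrangian $L(r,\dot r,\dot s)$ not depending on $s$ (invariant under the abelian group $G$ acting by translations in $s$), and linear constraints $\dot s^a=-A^a_\alpha(r)\dot r^\alpha$; its nonholonomic mechanics are the Lagrange–d'Alembert equations for $L$ with these constraints. Write $g_{\alpha\beta},g_{a\alpha},g_{ab}$ for the coefficients of the kinetic energy in $L$ (so $L=\tfrac12g_{\alpha\beta}\dot r^\alpha\dot r^\beta+g_{a\alpha}\dot r^\alpha\dot s^a+\tfrac12g_{ab}\dot s^a\dot s^b-V(r)$). The constrained Lagrangian is $l_c(r,\dot r)=L(r,\dot r,-A\dot r)$; $G_{\alpha\beta}=\partial^2l_c/\partial\dot r^\alpha\partial\dot r^\beta$, assumed invertible with inverse $G^{\alpha\beta}$; $\mathcal B^a_{\alpha\beta}=\partial A^a_\alpha/\partial r^\beta-\partial A^a_\beta/\partial r^\alpha$; $M_{a\alpha}=g_{a\alpha}-g_{ab}A^b_\alpha$; $K^\gamma_{\beta\alpha}=M_{b\epsilon}G^{\epsilon\gamma}\mathcal B^b_{\beta\alpha}$. Quasivelocities $\omega$ are defined by $\dot q=f(r)\omega$ (componentwise for all $n$ coordinates); the time reparameterization is $d\tau=f\,dt$. Summation convention. *)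

theory Defs
  imports "HOL-Analysis.Analysis"
begin

text \<open>Configuration space Q = R^m x R^k, coordinates q = (r,s) indexed by the sum type
  'm + 'k: q $ Inl alpha = r^alpha, q $ Inr a = s^a.\<close>

definition rpart :: "real^('m::finite + 'k::finite) \<Rightarrow> real^'m" where
  "rpart q = (\<chi> \<alpha>. q $ Inl \<alpha>)"

definition joinv :: "real^'m::finite \<Rightarrow> real^'k::finite \<Rightarrow> real^('m + 'k)" where
  "joinv r s = (\<chi> I. case I of Inl \<alpha> \<Rightarrow> r $ \<alpha> | Inr a \<Rightarrow> s $ a)"

definition pd :: "(real^'i::finite \<Rightarrow> real) \<Rightarrow> real^'i \<Rightarrow> 'i \<Rightarrow> real" where
  "pd F x i = deriv (\<lambda>h. F (x + h *\<^sub>R axis i 1)) 0"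

fun Ck :: "nat \<Rightarrow> (real^'i::finite \<Rightarrow> real) \<Rightarrow> bool" where
  "Ck 0 F = continuous_on UNIV F"
| "Ck (Suc k) F = ((\<forall>x. F differentiable (at x)) \<and> (\<forall>i. Ck k (\<lambda>x. pd F x i)))"

definition smooth_fun :: "(real^'i::finite \<Rightarrow> real) \<Rightarrow> bool" where
  "smooth_fun F = (\<forall>k. Ck k F)"

definition mechL ::
  "(real^'m \<Rightarrow> 'm \<Rightarrow> 'm \<Rightarrow> real) \<Rightarrow> (real^'m \<Rightarrow> 'k \<Rightarrow> 'm \<Rightarrow> real) \<Rightarrow>
   (real^'m \<Rightarrow> 'k \<Rightarrow> 'k \<Rightarrow> real) \<Rightarrow> (real^'m \<Rightarrow> real) \<Rightarrow>
   real^('m::finite + 'k::finite) \<Rightarrow> real^('m + 'k) \<Rightarrow> real" where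
  "mechL grr gsr gss V q v =
     (1/2) * (\<Sum>\<alpha>\<in>UNIV. \<Sum>\<beta>\<in>UNIV. grr (rpart q) \<alpha> \<beta> * v $ Inl \<alpha> * v $ Inl \<beta>)
   + (\<Sum>a\<in>UNIV. \<Sum>\<alpha>\<in>UNIV. gsr (rpart q) a \<alpha> * v $ Inl \<alpha> * v $ Inr a)
   + (1/2) * (\<Sum>a\<in>UNIV. \<Sum>b\<in>UNIV. gss (rpart q) a b * v $ Inr a * v $ Inr b)
   - V (rpart q)"

definition phi :: "(real^'m \<Rightarrow> 'k \<Rightarrow> 'm \<Rightarrow> real) \<Rightarrow> real^('m::finite + 'k::finite) \<Rightarrow>
   real^('m + 'k) \<Rightarrow> 'k \<Rightarrow> real" where
  "phi A q v a = v $ Inr a + (\<Sum>\<alpha>\<in>UNIV. A (rpart q) a \<alpha> * v $ Inl \<alpha>)"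

definition lc ::
  "(real^'m \<Rightarrow> 'm \<Rightarrow> 'm \<Rightarrow> real) \<Rightarrow> (real^'m \<Rightarrow> 'k::finite \<Rightarrow> 'm \<Rightarrow> real) \<Rightarrow>
   (real^'m \<Rightarrow> 'k \<Rightarrow> 'k \<Rightarrow> real) \<Rightarrow> (real^'m \<Rightarrow> real) \<Rightarrow>
   (real^'m \<Rightarrow> 'k \<Rightarrow> 'm \<Rightarrow> real) \<Rightarrow> real^'m::finite \<Rightarrow> real^'m \<Rightarrow> real" where
  "lc grr gsr gss V A r u =
     mechL grr gsr gss V (joinv r (0::real^'k))
       (joinv u (\<chi> a. - (\<Sum>\<beta>\<in>UNIV. A r a \<beta> * u $ \<beta>)))"

text \<open>G_{alpha beta} = d^2 l_c / d rdot^alpha d rdot^beta (l_c is quadratic in rdot, so the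
  Hessian does not depend on rdot; we evaluate it at rdot = 0).\<close>
definition Gmat ::
  "(real^'m \<Rightarrow> 'm \<Rightarrow> 'm \<Rightarrow> real) \<Rightarrow> (real^'m \<Rightarrow> 'k \<Rightarrow> 'm \<Rightarrow> real) \<Rightarrow>
   (real^'m \<Rightarrow> 'k::finite \<Rightarrow> 'k \<Rightarrow> real) \<Rightarrow> (real^'m \<Rightarrow> real) \<Rightarrow>
   (real^'m \<Rightarrow> 'k \<Rightarrow> 'm \<Rightarrow> real) \<Rightarrow> real^'m::finite \<Rightarrow> real^'m^'m" where
  "Gmat grr gsr gss V A r =
     (\<chi> \<alpha> \<beta>. pd (\<lambda>u. pd (lc grr gsr gss V A r) u \<alpha>) 0 \<beta>)"

definition Bcurv :: "(real^'m::finite \<Rightarrow> 'k \<Rightarrow> 'm \<Rightarrow> real) \<Rightarrow> real^'m \<Rightarrow> 'k \<Rightarrow> 'm \<Rightarrow> 'm \<Rightarrow> real" where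
  "Bcurv A r a \<alpha> \<beta> = pd (\<lambda>x. A x a \<alpha>) r \<beta> - pd (\<lambda>x. A x a \<beta>) r \<alpha>"

definition Mmat :: "(real^'m \<Rightarrow> 'k \<Rightarrow> 'm \<Rightarrow> real) \<Rightarrow> (real^'m \<Rightarrow> 'k::finite \<Rightarrow> 'k \<Rightarrow> real) \<Rightarrow>
   (real^'m \<Rightarrow> 'k \<Rightarrow> 'm \<Rightarrow> real) \<Rightarrow> real^'m::finite \<Rightarrow> 'k \<Rightarrow> 'm \<Rightarrow> real" where
  "Mmat gsr gss A r a \<alpha> = gsr r a \<alpha> - (\<Sum>b\<in>UNIV. gss r a b * A r b \<alpha>)"

definition Kten ::
  "(real^'m \<Rightarrow> 'm \<Rightarrow> 'm \<Rightarrow> real) \<Rightarrow> (real^'m \<Rightarrow> 'k \<Rightarrow> 'm \<Rightarrow> real) \<Rightarrow>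
   (real^'m \<Rightarrow> 'k::finite \<Rightarrow> 'k \<Rightarrow> real) \<Rightarrow> (real^'m \<Rightarrow> real) \<Rightarrow>
   (real^'m \<Rightarrow> 'k \<Rightarrow> 'm \<Rightarrow> real) \<Rightarrow> real^'m::finite \<Rightarrow> 'm \<Rightarrow> 'm \<Rightarrow> 'm \<Rightarrow> real" where
  "Kten grr gsr gss V A r \<gamma> \<beta> \<alpha> =
     (\<Sum>b\<in>UNIV. \<Sum>\<epsilon>\<in>UNIV. Mmat gsr gss A r b \<epsilon> * matrix_inv (Gmat grr gsr gss V A r) $ \<epsilon> $ \<gamma>
                 * Bcurv A r b \<beta> \<alpha>)"

definition calL ::
  "(real^'m \<Rightarrow> 'm \<Rightarrow> 'm \<Rightarrow> real) \<Rightarrow> (real^'m \<Rightarrow> 'k \<Rightarrow> 'm \<Rightarrow> real) \<Rightarrow>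
   (real^'m \<Rightarrow> 'k \<Rightarrow> 'k \<Rightarrow> real) \<Rightarrow> (real^'m \<Rightarrow> real) \<Rightarrow> (real^'m \<Rightarrow> real) \<Rightarrow>
   real^('m::finite + 'k::finite) \<Rightarrow> real^('m + 'k) \<Rightarrow> real" where
  "calL grr gsr gss V f q \<omega> = mechL grr gsr gss V q (f (rpart q) *\<^sub>R \<omega>)"

definition phiw :: "(real^'m \<Rightarrow> 'k \<Rightarrow> 'm \<Rightarrow> real) \<Rightarrow> (real^'m \<Rightarrow> real) \<Rightarrow>
   real^('m::finite + 'k::finite) \<Rightarrow> real^('m + 'k) \<Rightarrow> 'k \<Rightarrow> real" where
  "phiw A f q \<omega> a = phi A q (f (rpart q) *\<^sub>R \<omega>) a"

text \<open>tilde g_{ab} = d^2 calL / d omega^a d omega^b (s-components; quadratic in omega, so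
  evaluated at omega = 0).\<close>
definition gtilde ::
  "(real^'m \<Rightarrow> 'm \<Rightarrow> 'm \<Rightarrow> real) \<Rightarrow> (real^'m \<Rightarrow> 'k \<Rightarrow> 'm \<Rightarrow> real) \<Rightarrow>
   (real^'m \<Rightarrow> 'k \<Rightarrow> 'k \<Rightarrow> real) \<Rightarrow> (real^'m \<Rightarrow> real) \<Rightarrow> (real^'m \<Rightarrow> real) \<Rightarrow>
   real^('m::finite + 'k::finite) \<Rightarrow> real^'k^'k" where
  "gtilde grr gsr gss V f q =
     (\<chi> a b. pd (\<lambda>w. pd (calL grr gsr gss V f q) w (Inr a)) 0 (Inr b))"

definition LV ::
  "(real^'m \<Rightarrow> 'm \<Rightarrow> 'm \<Rightarrow> real) \<Rightarrow> (real^'m \<Rightarrow> 'k \<Rightarrow> 'm \<Rightarrow> real) \<Rightarrow>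
   (real^'m \<Rightarrow> 'k \<Rightarrow> 'k \<Rightarrow> real) \<Rightarrow> (real^'m \<Rightarrow> real) \<Rightarrow>
   (real^'m \<Rightarrow> 'k \<Rightarrow> 'm \<Rightarrow> real) \<Rightarrow> (real^'m \<Rightarrow> real) \<Rightarrow>
   real^('m::finite + 'k::finite) \<Rightarrow> real^('m + 'k) \<Rightarrow> real" where
  "LV grr gsr gss V A f q \<omega> =
     calL grr gsr gss V f q \<omega>
     - (1 / f (rpart q)) * (\<Sum>a\<in>UNIV. pd (calL grr gsr gss V f q) \<omega> (Inr a) * phiw A f q \<omega> a)"

end

theory Submission
  imports Defs
begin

text \<open>
  All Lagrangians involved are independent of s, so the s-components of the equations for L_V
  say that the momenta dL_V/d\<omega>^a are conserved. They equal -gtilde_ab \<phi>^b; as gtilde is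
  invertible and \<phi> vanishes initially, the constraints hold along the whole motion.
  On the constraint surface dL_V/d\<omega>^\<alpha> = f (p_\<alpha> - A^b_\<alpha> p_b), where p are the momenta of L
  at qdot = f \<omega>. Differentiating this and comparing with f dL_V/dr^\<alpha> gives the
  Lagrange-d'Alembert equation up to terms coming from the derivatives of f and of A. Contracted
  twice with rdot, and using G^{-1} to cancel G, the condition on f says exactly that these terms
  cancel.
\<close>


section \<open>Partial derivatives\<close>

lemma pd_eqI:
  "((\<lambda>h. F (x + h *\<^sub>R axis i 1)) has_real_derivative D) (at 0) \<Longrightarrow> pd F x i = D"
  by (simp add: pd_def DERIV_imp_deriv)

lemma has_real_derivative_along_line:
  fixes G :: "'a::real_normed_vector \<Rightarrow> real"
  assumes G': "(G has_derivative G') (at y)"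
  shows "((\<lambda>h. G (y + h *\<^sub>R d)) has_real_derivative G' d) (at 0)"
proof -
  have "((\<lambda>h::real. y + h *\<^sub>R d) has_derivative (\<lambda>h. h *\<^sub>R d)) (at 0)"
    by (auto intro!: derivative_eq_intros)
  then have "((\<lambda>h. G (y + h *\<^sub>R d)) has_derivative (\<lambda>h. G' (h *\<^sub>R d))) (at 0)"
    using has_derivative_compose[of "\<lambda>h. y + h *\<^sub>R d" _ 0 UNIV G G'] G' by simp
  moreover have "(\<lambda>h. G' (h *\<^sub>R d)) = (*) (G' d)"
    using linear_scale[OF has_derivative_linear[OF G']] by (auto simp: mult.commute)
  ultimately show ?thesis unfolding has_field_derivative_def by simp
qed

lemma has_real_derivative_pd:
  fixes G :: "real^'i::finite \<Rightarrow> real"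
  assumes "G differentiable (at y)"
  shows "((\<lambda>h. G (y + h *\<^sub>R axis i 1)) has_real_derivative pd G y i) (at 0)"
proof -
  obtain G' where G': "(G has_derivative G') (at y)"
    using assms differentiable_def by blast
  show ?thesis
    using has_real_derivative_along_line[OF G'] pd_eqI[OF has_real_derivative_along_line[OF G']]
    by simp
qed

lemma has_derivative_pd_sum:
  fixes G :: "real^'i::finite \<Rightarrow> real"
  assumes "G differentiable (at y)"
  shows "(G has_derivative (\<lambda>h. \<Sum>i\<in>UNIV. pd G y i * h $ i)) (at y)"
proof -
  obtain G' where G': "(G has_derivative G') (at y)"
    using assms differentiable_def by blast
  have "G' h = (\<Sum>i\<in>UNIV. pd G y i * h $ i)" for h
  proof -
    have "G' h = G' (\<Sum>i\<in>UNIV. h $ i *\<^sub>R axis i 1)"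
      using basis_expansion[of h] by (simp add: scalar_mult_eq_scaleR)
    also have "\<dots> = (\<Sum>i\<in>UNIV. h $ i * G' (axis i 1))"
      using has_derivative_linear[OF G'] by (simp add: linear_sum linear_scale)
    finally show ?thesis
      by (simp add: pd_eqI[OF has_real_derivative_along_line[OF G']] mult.commute)
  qed
  then have "G' = (\<lambda>h. \<Sum>i\<in>UNIV. pd G y i * h $ i)" by auto
  with G' show ?thesis by simp
qed

lemma has_real_derivative_along_line_pd:
  fixes G :: "real^'i::finite \<Rightarrow> real"
  assumes "G differentiable (at v)"
  shows "((\<lambda>h. G (v + h *\<^sub>R d)) has_real_derivative (\<Sum>i\<in>UNIV. pd G v i * d $ i)) (at 0)"
  using has_real_derivative_along_line[OF has_derivative_pd_sum[OF assms]] .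

lemma pd_eq_0_if_invariant:
  "(\<And>h. F (x + h *\<^sub>R axis i 1) = F x) \<Longrightarrow> pd F x i = 0"
  by (rule pd_eqI) simp

lemma rpart_nth [simp]: "rpart x $ \<alpha> = x $ Inl \<alpha>"
  by (simp add: rpart_def)

lemma rpart_joinv [simp]: "rpart (joinv r s) = r"
  by (simp add: rpart_def joinv_def)

lemma rpart_add_axis_Inl: "rpart (x + h *\<^sub>R axis (Inl \<alpha>) 1) = rpart x + h *\<^sub>R axis \<alpha> (1::real)"
  by (simp add: rpart_def axis_def vec_eq_iff)

lemma rpart_add_axis_Inr: "rpart (x + h *\<^sub>R axis (Inr a) (1::real)) = rpart x"
  by (simp add: rpart_def axis_def vec_eq_iff)

lemma bounded_linear_rpart: "bounded_linear (rpart :: real^('m::finite + 'k::finite) \<Rightarrow> real^'m)"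
  unfolding linear_conv_bounded_linear[symmetric] by (rule linearI) (simp_all add: vec_eq_iff)

lemma has_real_derivative_comp_rpart:
  fixes G :: "real^'m::finite \<Rightarrow> real" and q :: "real \<Rightarrow> real^('m + 'k::finite)"
  assumes G: "G differentiable (at (rpart (q t)))" and q: "(q has_vector_derivative v) (at t)"
  shows "((\<lambda>\<tau>. G (rpart (q \<tau>))) has_real_derivative (\<Sum>\<beta>\<in>UNIV. pd G (rpart (q t)) \<beta> * v $ Inl \<beta>)) (at t)"
proof -
  have "((\<lambda>\<tau>. rpart (q \<tau>)) has_derivative (\<lambda>h. rpart (h *\<^sub>R v))) (at t)"
    using has_derivative_compose[OF q[unfolded has_vector_derivative_def]
        bounded_linear_imp_has_derivative[OF bounded_linear_rpart]] by simp
  from has_derivative_compose[OF this has_derivative_pd_sum[OF G]]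
  have "((\<lambda>\<tau>. G (rpart (q \<tau>))) has_derivative
          (\<lambda>h. \<Sum>i\<in>UNIV. pd G (rpart (q t)) i * rpart (h *\<^sub>R v) $ i)) (at t)" .
  moreover have "(\<lambda>h. \<Sum>i\<in>UNIV. pd G (rpart (q t)) i * rpart (h *\<^sub>R v) $ i)
      = (*) (\<Sum>\<beta>\<in>UNIV. pd G (rpart (q t)) \<beta> * v $ Inl \<beta>)"
    by (simp add: fun_eq_iff sum_distrib_left mult_ac)
  ultimately show ?thesis unfolding has_field_derivative_def by simp
qed

lemma sum_UNIV_Plus:
  "(\<Sum>I\<in>(UNIV::('a::finite + 'b::finite) set). g I) = (\<Sum>\<alpha>\<in>UNIV. g (Inl \<alpha>)) + (\<Sum>a\<in>UNIV. g (Inr a))"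
  by (subst UNIV_Plus_UNIV[symmetric], subst sum.Plus) (simp_all add: o_def)

lemma matrix_inv_left_sum:
  fixes M :: "real^'n::finite^'n"
  assumes "invertible M"
  shows "(\<Sum>\<mu>\<in>UNIV. matrix_inv M $ \<epsilon> $ \<mu> * M $ \<mu> $ \<nu>) = (if \<epsilon> = \<nu> then 1 else 0)"
proof -
  have "matrix_inv M ** M = mat 1"
    using assms unfolding invertible_def matrix_inv_def by (rule someI2_ex) auto
  then have "(matrix_inv M ** M) $ \<epsilon> $ \<nu> = mat 1 $ \<epsilon> $ \<nu>" by simp
  then show ?thesis by (simp add: matrix_matrix_mult_def mat_def)
qed

lemma axis_one_nth_mult:
  "axis i (1::real) $ j * x = (if j = i then x else 0)"
  "x * axis i (1::real) $ j = (if j = i then x else 0)"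
  by (simp_all add: axis_def)

lemma mult_if_zero: "(c::real) * (if P then x else 0) = (if P then c * x else 0)"
  by simp

lemma sum_if_const_cond: "(\<Sum>x\<in>S. if P then g x else (0::real)) = (if P then sum g S else 0)"
  by simp

lemmas delta_simps = axis_one_nth_mult mult_if_delta mult_if_zero sum_if_const_cond

section \<open>Kinetic energy, momenta and constraints\<close>

definition kinetic :: "(real^'m \<Rightarrow> 'm \<Rightarrow> 'm \<Rightarrow> real) \<Rightarrow> (real^'m \<Rightarrow> 'k \<Rightarrow> 'm \<Rightarrow> real) \<Rightarrow>
   (real^'m \<Rightarrow> 'k \<Rightarrow> 'k \<Rightarrow> real) \<Rightarrow> real^'m::finite \<Rightarrow> real^('m + 'k::finite) \<Rightarrow> real" where
  "kinetic grr gsr gss r v =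
     (1/2) * (\<Sum>\<alpha>\<in>UNIV. \<Sum>\<beta>\<in>UNIV. grr r \<alpha> \<beta> * v $ Inl \<alpha> * v $ Inl \<beta>)
   + (\<Sum>a\<in>UNIV. \<Sum>\<alpha>\<in>UNIV. gsr r a \<alpha> * v $ Inl \<alpha> * v $ Inr a)
   + (1/2) * (\<Sum>a\<in>UNIV. \<Sum>b\<in>UNIV. gss r a b * v $ Inr a * v $ Inr b)"

definition momentum :: "(real^'m \<Rightarrow> 'm \<Rightarrow> 'm \<Rightarrow> real) \<Rightarrow> (real^'m \<Rightarrow> 'k \<Rightarrow> 'm \<Rightarrow> real) \<Rightarrow>
   (real^'m \<Rightarrow> 'k \<Rightarrow> 'k \<Rightarrow> real) \<Rightarrow> real^'m::finite \<Rightarrow> real^('m + 'k::finite) \<Rightarrow> 'm + 'k \<Rightarrow> real" where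
  "momentum grr gsr gss r v I = (case I of
      Inl \<alpha> \<Rightarrow> (\<Sum>\<beta>\<in>UNIV. grr r \<alpha> \<beta> * v $ Inl \<beta>) + (\<Sum>a\<in>UNIV. gsr r a \<alpha> * v $ Inr a)
    | Inr a \<Rightarrow> (\<Sum>\<alpha>\<in>UNIV. gsr r a \<alpha> * v $ Inl \<alpha>) + (\<Sum>b\<in>UNIV. gss r a b * v $ Inr b))"

definition constraint :: "(real^'m \<Rightarrow> 'k \<Rightarrow> 'm \<Rightarrow> real) \<Rightarrow> real^'m::finite \<Rightarrow> real^('m + 'k::finite) \<Rightarrow> 'k \<Rightarrow> real" where
  "constraint A r v b = v $ Inr b + (\<Sum>\<alpha>\<in>UNIV. A r b \<alpha> * v $ Inl \<alpha>)"

lemma mechL_eq_kinetic: "mechL grr gsr gss V q v = kinetic grr gsr gss (rpart q) v - V (rpart q)"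
  by (simp add: mechL_def kinetic_def)

lemma phi_eq_constraint: "phi A q v b = constraint A (rpart q) v b"
  by (simp add: phi_def constraint_def)

lemma kinetic_scaleR: "kinetic grr gsr gss r (c *\<^sub>R v) = c\<^sup>2 * kinetic grr gsr gss r v"
  by (simp add: kinetic_def algebra_simps sum_distrib_left power2_eq_square)

lemma momentum_add:
  "momentum grr gsr gss r (v + w) I = momentum grr gsr gss r v I + momentum grr gsr gss r w I"
  by (simp add: momentum_def algebra_simps sum.distrib split: sum.split)

lemma momentum_scaleR: "momentum grr gsr gss r (c *\<^sub>R v) I = c * momentum grr gsr gss r v I"
  by (simp add: momentum_def algebra_simps sum_distrib_left split: sum.split)

lemma constraint_add: "constraint A r (v + w) b = constraint A r v b + constraint A r w b"
  by (simp add: constraint_def algebra_simps sum.distrib)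

lemma constraint_scaleR: "constraint A r (c *\<^sub>R v) b = c * constraint A r v b"
  by (simp add: constraint_def algebra_simps sum_distrib_left)

lemma momentum_axis_Inr: "momentum grr gsr gss r (axis (Inr a) 1) (Inr b) = gss r b a"
  by (simp add: momentum_def delta_simps)

lemma momentum_axis_Inl: "momentum grr gsr gss r (axis (Inl \<alpha>) 1) (Inr b) = gsr r b \<alpha>"
  by (simp add: momentum_def delta_simps)

lemma constraint_axis_Inr: "constraint A r (axis (Inr a) 1) b = (if b = a then 1 else 0)"
  by (simp add: constraint_def delta_simps axis_def)

lemma constraint_axis_Inl: "constraint A r (axis (Inl \<alpha>) 1) b = A r b \<alpha>"
  by (simp add: constraint_def delta_simps axis_def)

lemma kinetic_differentiable: "kinetic grr gsr gss r differentiable (at v)"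
proof -
  have "(\<lambda>w::real^'z::finite. w $ i) differentiable (at x)" for i x
    by (rule bounded_linear_imp_differentiable[OF bounded_linear_vec_nth])
  then show ?thesis unfolding kinetic_def
    by (intro differentiable_add differentiable_sum differentiable_mult differentiable_const ballI) auto
qed

lemma has_real_derivative_kinetic_axis:
  assumes grr_sym: "\<And>\<alpha> \<beta>. grr r \<alpha> \<beta> = grr r \<beta> \<alpha>" and gss_sym: "\<And>a b. gss r a b = gss r b a"
  shows "((\<lambda>h. kinetic grr gsr gss r (v + h *\<^sub>R axis I 1)) has_real_derivative
           momentum grr gsr gss r v I) (at 0)"
proof -
  define e where "e J = axis I (1::real) $ J" for J
  have quad: "((\<lambda>h::real. \<Sum>x\<in>X. \<Sum>y\<in>Y. c x y * (a x y + h * d x y) * (b x y + h * d' x y))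
      has_real_derivative (\<Sum>x\<in>X. \<Sum>y\<in>Y. c x y * (d x y * b x y + a x y * d' x y))) (at 0)"
    for X Y c a b d d'
    by (auto intro!: derivative_eq_intros simp: algebra_simps)
  have "((\<lambda>h. kinetic grr gsr gss r (v + h *\<^sub>R axis I 1)) has_real_derivative
     (1/2) * (\<Sum>\<alpha>\<in>UNIV. \<Sum>\<beta>\<in>UNIV. grr r \<alpha> \<beta> * (e (Inl \<alpha>) * v $ Inl \<beta> + v $ Inl \<alpha> * e (Inl \<beta>)))
   + (\<Sum>a\<in>UNIV. \<Sum>\<alpha>\<in>UNIV. gsr r a \<alpha> * (e (Inl \<alpha>) * v $ Inr a + v $ Inl \<alpha> * e (Inr a)))
   + (1/2) * (\<Sum>a\<in>UNIV. \<Sum>b\<in>UNIV. gss r a b * (e (Inr a) * v $ Inr b + v $ Inr a * e (Inr b)))) (at 0)"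
    unfolding kinetic_def vector_add_component vector_scaleR_component real_scaleR_def e_def[symmetric]
    by (intro DERIV_add DERIV_cmult quad)
  moreover have "(1/2) * (\<Sum>\<alpha>\<in>UNIV. \<Sum>\<beta>\<in>UNIV. grr r \<alpha> \<beta> * (e (Inl \<alpha>) * v $ Inl \<beta> + v $ Inl \<alpha> * e (Inl \<beta>)))
   + (\<Sum>a\<in>UNIV. \<Sum>\<alpha>\<in>UNIV. gsr r a \<alpha> * (e (Inl \<alpha>) * v $ Inr a + v $ Inl \<alpha> * e (Inr a)))
   + (1/2) * (\<Sum>a\<in>UNIV. \<Sum>b\<in>UNIV. gss r a b * (e (Inr a) * v $ Inr b + v $ Inr a * e (Inr b)))
   = momentum grr gsr gss r v I"
  proof (cases I)
    case (Inl \<gamma>)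
    then show ?thesis
      by (simp add: e_def momentum_def distrib_left sum.distrib delta_simps grr_sym[of _ \<gamma>] cong: if_cong)
  next
    case (Inr c)
    then show ?thesis
      by (simp add: e_def momentum_def distrib_left sum.distrib delta_simps gss_sym[of _ c] cong: if_cong)
  qed
  ultimately show ?thesis by simp
qed

lemma pd_kinetic:
  assumes "\<And>\<alpha> \<beta>. grr r \<alpha> \<beta> = grr r \<beta> \<alpha>" and "\<And>a b. gss r a b = gss r b a"
  shows "pd (kinetic grr gsr gss r) v I = momentum grr gsr gss r v I"
  by (rule pd_eqI[OF has_real_derivative_kinetic_axis[where grr=grr and gss=gss, OF assms]])

lemma has_real_derivative_kinetic_line:
  assumes "\<And>\<alpha> \<beta>. grr r \<alpha> \<beta> = grr r \<beta> \<alpha>" and "\<And>a b. gss r a b = gss r b a"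
  shows "((\<lambda>h. kinetic grr gsr gss r (v + h *\<^sub>R d)) has_real_derivative
           (\<Sum>I\<in>UNIV. momentum grr gsr gss r v I * d $ I)) (at 0)"
  using has_real_derivative_along_line_pd[OF kinetic_differentiable, of grr gsr gss r v d]
  by (simp add: pd_kinetic[where grr=grr and gss=gss, OF assms])

lemma kinetic_euler:
  assumes "\<And>\<alpha> \<beta>. grr r \<alpha> \<beta> = grr r \<beta> \<alpha>" and "\<And>a b. gss r a b = gss r b a"
  shows "(\<Sum>I\<in>UNIV. momentum grr gsr gss r v I * v $ I) = 2 * kinetic grr gsr gss r v"
proof -
  have "kinetic grr gsr gss r (v + h *\<^sub>R v) = (1 + h)\<^sup>2 * kinetic grr gsr gss r v" for h
    using kinetic_scaleR[of grr gsr gss r "1 + h" v] by (simp add: algebra_simps)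
  then have "((\<lambda>h. kinetic grr gsr gss r (v + h *\<^sub>R v)) has_real_derivative 2 * kinetic grr gsr gss r v) (at 0)"
    by (auto intro!: derivative_eq_intros)
  with has_real_derivative_kinetic_line[where grr=grr and gss=gss, OF assms, of gsr v v] show ?thesis
    using DERIV_unique by blast
qed

definition horizontal_lift :: "(real^'m \<Rightarrow> 'k \<Rightarrow> 'm \<Rightarrow> real) \<Rightarrow> real^'m::finite \<Rightarrow> real^'m \<Rightarrow> real^('m + 'k::finite)" where
  "horizontal_lift A r u = joinv u (\<chi> a. - (\<Sum>\<beta>\<in>UNIV. A r a \<beta> * u $ \<beta>))"

definition reduced_momentum :: "(real^'m \<Rightarrow> 'm \<Rightarrow> 'm \<Rightarrow> real) \<Rightarrow> (real^'m \<Rightarrow> 'k \<Rightarrow> 'm \<Rightarrow> real) \<Rightarrow>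
   (real^'m \<Rightarrow> 'k \<Rightarrow> 'k \<Rightarrow> real) \<Rightarrow> (real^'m \<Rightarrow> 'k \<Rightarrow> 'm \<Rightarrow> real) \<Rightarrow>
   real^'m::finite \<Rightarrow> real^('m + 'k::finite) \<Rightarrow> 'm \<Rightarrow> real" where
  "reduced_momentum grr gsr gss A r v \<alpha> =
     momentum grr gsr gss r v (Inl \<alpha>) - (\<Sum>b\<in>UNIV. A r b \<alpha> * momentum grr gsr gss r v (Inr b))"

lemma horizontal_lift_Inl [simp]: "horizontal_lift A r u $ Inl \<alpha> = u $ \<alpha>"
  by (simp add: horizontal_lift_def joinv_def)

lemma horizontal_lift_Inr [simp]: "horizontal_lift A r u $ Inr b = - (\<Sum>\<beta>\<in>UNIV. A r b \<beta> * u $ \<beta>)"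
  by (simp add: horizontal_lift_def joinv_def)

lemma linear_horizontal_lift: "linear (horizontal_lift A r)"
  by (rule linearI)
     (auto simp: vec_eq_iff horizontal_lift_def joinv_def algebra_simps sum.distrib sum_distrib_left
           split: sum.split)

lemma horizontal_lift_rpart:
  assumes "\<And>b. constraint A r v b = 0"
  shows "horizontal_lift A r (rpart v) = v"
proof -
  have "horizontal_lift A r (rpart v) $ I = v $ I" for I
    using assms[of "projr I"] by (cases I) (simp_all add: constraint_def eq_neg_iff_add_eq_0)
  then show ?thesis by (simp add: vec_eq_iff)
qed

lemma linear_reduced_momentum: "linear (\<lambda>v. reduced_momentum grr gsr gss A r v \<alpha>)"
  by (rule linearI)
     (simp_all add: reduced_momentum_def momentum_add momentum_scaleR algebra_simps sum.distrib
                    sum_distrib_left)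

lemma lc_eq_kinetic: "lc grr gsr gss V A r u = kinetic grr gsr gss r (horizontal_lift A r u) - V r"
  by (simp add: lc_def mechL_eq_kinetic horizontal_lift_def)

lemma momentum_Inr_horizontal_lift:
  "momentum grr gsr gss r (horizontal_lift A r u) (Inr b) = (\<Sum>\<gamma>\<in>UNIV. Mmat gsr gss A r b \<gamma> * u $ \<gamma>)"
proof -
  have "(\<Sum>c\<in>UNIV. gss r b c * (\<Sum>\<beta>\<in>UNIV. A r c \<beta> * u $ \<beta>))
      = (\<Sum>\<gamma>\<in>UNIV. (\<Sum>c\<in>UNIV. gss r b c * A r c \<gamma>) * u $ \<gamma>)"
    unfolding sum_distrib_left sum_distrib_right by (subst sum.swap) (simp add: mult_ac)
  then show ?thesis
    by (simp add: momentum_def Mmat_def left_diff_distrib sum_subtractf sum_negf)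
qed

definition kinetic_dr :: "(real^'m \<Rightarrow> 'm \<Rightarrow> 'm \<Rightarrow> real) \<Rightarrow> (real^'m \<Rightarrow> 'k \<Rightarrow> 'm \<Rightarrow> real) \<Rightarrow>
   (real^'m \<Rightarrow> 'k \<Rightarrow> 'k \<Rightarrow> real) \<Rightarrow> real^'m::finite \<Rightarrow> 'm \<Rightarrow> real^('m + 'k::finite) \<Rightarrow> real" where
  "kinetic_dr grr gsr gss r \<alpha> v = kinetic (\<lambda>_ \<beta> \<gamma>. pd (\<lambda>x. grr x \<beta> \<gamma>) r \<alpha>) (\<lambda>_ a \<beta>. pd (\<lambda>x. gsr x a \<beta>) r \<alpha>)
      (\<lambda>_ a b. pd (\<lambda>x. gss x a b) r \<alpha>) r v"

definition constraint_dr :: "(real^'m \<Rightarrow> 'k \<Rightarrow> 'm \<Rightarrow> real) \<Rightarrow> real^'m::finite \<Rightarrow> 'm \<Rightarrow>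
   real^('m + 'k::finite) \<Rightarrow> 'k \<Rightarrow> real" where
  "constraint_dr A r \<alpha> v b = (\<Sum>\<beta>\<in>UNIV. pd (\<lambda>x. A x b \<beta>) r \<alpha> * v $ Inl \<beta>)"

lemma kinetic_dr_scaleR: "kinetic_dr grr gsr gss r \<alpha> (c *\<^sub>R v) = c\<^sup>2 * kinetic_dr grr gsr gss r \<alpha> v"
  by (simp add: kinetic_dr_def kinetic_scaleR)

lemma constraint_dr_scaleR: "constraint_dr A r \<alpha> (c *\<^sub>R v) b = c * constraint_dr A r \<alpha> v b"
  by (simp add: constraint_dr_def sum_distrib_left mult_ac)

lemma calL_eq_kinetic:
  "calL grr gsr gss V f q w = (f (rpart q))\<^sup>2 * kinetic grr gsr gss (rpart q) w - V (rpart q)"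
  by (simp add: calL_def mechL_eq_kinetic kinetic_scaleR)

lemma mechL_cong_rpart: "rpart x = rpart y \<Longrightarrow> mechL grr gsr gss V x = mechL grr gsr gss V y"
  by (simp add: mechL_def fun_eq_iff)

lemma calL_cong_rpart: "rpart x = rpart y \<Longrightarrow> calL grr gsr gss V f x = calL grr gsr gss V f y"
  by (simp add: calL_def mechL_def fun_eq_iff)

lemma LV_cong_rpart: "rpart x = rpart y \<Longrightarrow> LV grr gsr gss V A f x = LV grr gsr gss V A f y"
proof
  fix w assume "rpart x = rpart y"
  then show "LV grr gsr gss V A f x w = LV grr gsr gss V A f y w"
    by (simp add: LV_def calL_cong_rpart[of x y] phiw_def phi_def)
qed

lemma pd_mechL_position_Inr: "pd (\<lambda>x. mechL grr gsr gss V x v) x (Inr a) = 0"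
  by (rule pd_eq_0_if_invariant) (simp add: mechL_cong_rpart[OF rpart_add_axis_Inr])

lemma pd_LV_position_Inr: "pd (\<lambda>x. LV grr gsr gss V A f x w) x (Inr a) = 0"
  by (rule pd_eq_0_if_invariant) (simp add: LV_cong_rpart[OF rpart_add_axis_Inr])

section \<open>Contracting the condition on f\<close>

lemma sum_matrix_inverse_contract:
  fixes Gi G :: "'m::finite \<Rightarrow> 'm \<Rightarrow> real" and M :: "'k::finite \<Rightarrow> 'm \<Rightarrow> real" and B :: "'k \<Rightarrow> real"
  assumes inv: "\<And>\<epsilon> \<nu>. (\<Sum>\<mu>\<in>UNIV. Gi \<epsilon> \<mu> * G \<mu> \<nu>) = (if \<epsilon> = \<nu> then 1 else 0)"
  shows "(\<Sum>\<mu>\<in>UNIV. (\<Sum>b\<in>UNIV. \<Sum>\<epsilon>\<in>UNIV. M b \<epsilon> * Gi \<epsilon> \<mu> * B b) * G \<mu> \<nu>) = (\<Sum>b\<in>UNIV. M b \<nu> * B b)"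
proof -
  have "(\<Sum>\<mu>\<in>UNIV. (\<Sum>b\<in>UNIV. \<Sum>\<epsilon>\<in>UNIV. M b \<epsilon> * Gi \<epsilon> \<mu> * B b) * G \<mu> \<nu>)
      = (\<Sum>\<mu>\<in>UNIV. \<Sum>b\<in>UNIV. \<Sum>\<epsilon>\<in>UNIV. M b \<epsilon> * B b * (Gi \<epsilon> \<mu> * G \<mu> \<nu>))"
    by (simp add: sum_distrib_left sum_distrib_right mult_ac)
  also have "\<dots> = (\<Sum>b\<in>UNIV. \<Sum>\<epsilon>\<in>UNIV. \<Sum>\<mu>\<in>UNIV. M b \<epsilon> * B b * (Gi \<epsilon> \<mu> * G \<mu> \<nu>))"
    by (subst sum.swap) (rule sum.cong[OF refl], rule sum.swap)
  also have "\<dots> = (\<Sum>b\<in>UNIV. M b \<nu> * B b)"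
    by (simp add: sum_distrib_left[symmetric] inv mult_if_zero)
  finally show ?thesis .
qed

lemma sum_symmetrize:
  "(\<Sum>x\<in>S. \<Sum>y\<in>S. (X x y + X y x) * u x * u y) = 2 * (\<Sum>x\<in>S. \<Sum>y\<in>S. X x y * u x * u y :: real)"
proof -
  have "(\<Sum>x\<in>S. \<Sum>y\<in>S. X y x * u x * u y) = (\<Sum>x\<in>S. \<Sum>y\<in>S. X x y * u x * u y)"
    by (subst sum.swap) (simp add: mult_ac)
  then show ?thesis by (simp add: distrib_right sum.distrib)
qed

lemma quadratic_contraction:
  fixes G :: "'m::finite \<Rightarrow> 'm \<Rightarrow> real" and K :: "'m \<Rightarrow> 'm \<Rightarrow> 'm \<Rightarrow> real"
    and M :: "'k::finite \<Rightarrow> 'm \<Rightarrow> real" and B :: "'k \<Rightarrow> 'm \<Rightarrow> real"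
  assumes cond: "\<And>\<nu> \<delta>. df \<delta> * G \<alpha> \<nu> + df \<nu> * G \<alpha> \<delta> - 2 * df \<alpha> * G \<delta> \<nu>
      = c * (\<Sum>\<mu>\<in>UNIV. K \<mu> \<alpha> \<delta> * G \<mu> \<nu> + K \<mu> \<alpha> \<nu> * G \<mu> \<delta>)"
    and KG: "\<And>\<delta> \<nu>. (\<Sum>\<mu>\<in>UNIV. K \<mu> \<alpha> \<delta> * G \<mu> \<nu>) = (\<Sum>b\<in>UNIV. M b \<nu> * B b \<delta>)"
  shows "(\<Sum>\<delta>\<in>UNIV. df \<delta> * u \<delta>) * (\<Sum>\<nu>\<in>UNIV. G \<alpha> \<nu> * u \<nu>)
           - df \<alpha> * (\<Sum>\<delta>\<in>UNIV. \<Sum>\<nu>\<in>UNIV. G \<delta> \<nu> * u \<delta> * u \<nu>)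
       = c * (\<Sum>b\<in>UNIV. (\<Sum>\<nu>\<in>UNIV. M b \<nu> * u \<nu>) * (\<Sum>\<delta>\<in>UNIV. B b \<delta> * u \<delta>))"
proof -
  define Y where "Y \<delta> \<nu> = (\<Sum>b\<in>UNIV. M b \<nu> * B b \<delta>)" for \<delta> \<nu>
  have cond_Y: "df \<delta> * G \<alpha> \<nu> + df \<nu> * G \<alpha> \<delta> - 2 * df \<alpha> * G \<delta> \<nu> = c * (Y \<delta> \<nu> + Y \<nu> \<delta>)"
    for \<delta> \<nu>
    by (simp add: cond sum.distrib KG Y_def)
  have "(\<Sum>\<delta>\<in>UNIV. df \<delta> * u \<delta>) * (\<Sum>\<nu>\<in>UNIV. G \<alpha> \<nu> * u \<nu>)
      = (\<Sum>\<delta>\<in>UNIV. \<Sum>\<nu>\<in>UNIV. df \<delta> * G \<alpha> \<nu> * u \<delta> * u \<nu>)"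
    by (simp add: sum_product mult_ac)
  then have "2 * ((\<Sum>\<delta>\<in>UNIV. df \<delta> * u \<delta>) * (\<Sum>\<nu>\<in>UNIV. G \<alpha> \<nu> * u \<nu>)
           - df \<alpha> * (\<Sum>\<delta>\<in>UNIV. \<Sum>\<nu>\<in>UNIV. G \<delta> \<nu> * u \<delta> * u \<nu>))
      = 2 * (\<Sum>\<delta>\<in>UNIV. \<Sum>\<nu>\<in>UNIV. df \<delta> * G \<alpha> \<nu> * u \<delta> * u \<nu>)
        - (\<Sum>\<delta>\<in>UNIV. \<Sum>\<nu>\<in>UNIV. 2 * df \<alpha> * G \<delta> \<nu> * u \<delta> * u \<nu>)"
    by (simp only: right_diff_distrib) (simp add: sum_distrib_left mult_ac)
  also have "\<dots> = (\<Sum>\<delta>\<in>UNIV. \<Sum>\<nu>\<in>UNIV. (df \<delta> * G \<alpha> \<nu> + df \<nu> * G \<alpha> \<delta>) * u \<delta> * u \<nu>)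
        - (\<Sum>\<delta>\<in>UNIV. \<Sum>\<nu>\<in>UNIV. 2 * df \<alpha> * G \<delta> \<nu> * u \<delta> * u \<nu>)"
    using sum_symmetrize[where X="\<lambda>\<delta> \<nu>. df \<delta> * G \<alpha> \<nu>" and S=UNIV and u=u] by simp
  also have "\<dots> = (\<Sum>\<delta>\<in>UNIV. \<Sum>\<nu>\<in>UNIV. c * (Y \<delta> \<nu> + Y \<nu> \<delta>) * u \<delta> * u \<nu>)"
    by (simp add: cond_Y[symmetric] sum_subtractf left_diff_distrib)
  also have "\<dots> = c * (\<Sum>\<delta>\<in>UNIV. \<Sum>\<nu>\<in>UNIV. (Y \<delta> \<nu> + Y \<nu> \<delta>) * u \<delta> * u \<nu>)"
    by (simp add: sum_distrib_left mult.assoc)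
  also have "\<dots> = 2 * c * (\<Sum>\<delta>\<in>UNIV. \<Sum>\<nu>\<in>UNIV. (\<Sum>b\<in>UNIV. M b \<nu> * B b \<delta>) * u \<delta> * u \<nu>)"
    by (simp add: sum_symmetrize Y_def)
  also have "\<dots> = 2 * c * (\<Sum>\<delta>\<in>UNIV. \<Sum>b\<in>UNIV. \<Sum>\<nu>\<in>UNIV. B b \<delta> * u \<delta> * (M b \<nu> * u \<nu>))"
    by (simp add: sum_distrib_left sum_distrib_right mult_ac sum.swap[of _ UNIV "UNIV::'k set"])
  also have "\<dots> = 2 * c * (\<Sum>b\<in>UNIV. (\<Sum>\<nu>\<in>UNIV. M b \<nu> * u \<nu>) * (\<Sum>\<delta>\<in>UNIV. B b \<delta> * u \<delta>))"
    by (subst sum.swap) (simp add: sum_product mult.commute)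
  finally show ?thesis by simp
qed

section \<open>The Lagrangians of an abelian Chaplygin system\<close>

locale chaplygin_system =
  fixes grr :: "real^'m::finite \<Rightarrow> 'm \<Rightarrow> 'm \<Rightarrow> real"
    and gsr :: "real^'m \<Rightarrow> 'k::finite \<Rightarrow> 'm \<Rightarrow> real"
    and gss :: "real^'m \<Rightarrow> 'k \<Rightarrow> 'k \<Rightarrow> real"
    and V :: "real^'m \<Rightarrow> real"
    and A :: "real^'m \<Rightarrow> 'k \<Rightarrow> 'm \<Rightarrow> real"
    and f :: "real^'m \<Rightarrow> real"
  assumes grr_sym: "\<And>r \<alpha> \<beta>. grr r \<alpha> \<beta> = grr r \<beta> \<alpha>"
    and gss_sym: "\<And>r a b. gss r a b = gss r b a"
    and grr_differentiable: "\<And>\<beta> \<gamma> y. (\<lambda>r. grr r \<beta> \<gamma>) differentiable (at y)"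
    and gsr_differentiable: "\<And>a \<beta> y. (\<lambda>r. gsr r a \<beta>) differentiable (at y)"
    and gss_differentiable: "\<And>a b y. (\<lambda>r. gss r a b) differentiable (at y)"
    and V_differentiable: "\<And>y. V differentiable (at y)"
    and A_differentiable: "\<And>a \<beta> y. (\<lambda>r. A r a \<beta>) differentiable (at y)"
    and f_differentiable: "\<And>y. f differentiable (at y)"
    and f_nonzero: "\<And>r. f r \<noteq> 0"
begin

lemma has_real_derivative_kinetic_velocity:
  "((\<lambda>h. kinetic grr gsr gss r (v + h *\<^sub>R axis I 1)) has_real_derivative
      momentum grr gsr gss r v I) (at 0)"
  by (rule has_real_derivative_kinetic_axis) (simp_all add: grr_sym gss_sym)

lemma pd_mechL_velocity: "pd (mechL grr gsr gss V q) v I = momentum grr gsr gss (rpart q) v I"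
  unfolding mechL_eq_kinetic
  by (rule pd_eqI) (intro DERIV_diff[where E=0, simplified] has_real_derivative_kinetic_velocity DERIV_const)

lemma pd_calL_velocity:
  "pd (calL grr gsr gss V f q) w I = (f (rpart q))\<^sup>2 * momentum grr gsr gss (rpart q) w I"
  unfolding calL_eq_kinetic
  by (rule pd_eqI)
     (intro DERIV_diff[where E=0, simplified] DERIV_cmult has_real_derivative_kinetic_velocity DERIV_const)

lemma gtilde_eq: "gtilde grr gsr gss V f q $ a $ b = (f (rpart q))\<^sup>2 * gss (rpart q) a b"
proof -
  have "pd (\<lambda>w. pd (calL grr gsr gss V f q) w (Inr a)) 0 (Inr b) = (f (rpart q))\<^sup>2 * gss (rpart q) a b"
    by (rule pd_eqI)
       (auto simp: pd_calL_velocity momentum_scaleR momentum_axis_Inr gss_sym[of _ b a]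
             intro!: derivative_eq_intros)
  then show ?thesis by (simp add: gtilde_def)
qed

lemma LV_eq_kinetic:
  "LV grr gsr gss V A f q w = (f (rpart q))\<^sup>2 * kinetic grr gsr gss (rpart q) w - V (rpart q)
     - (f (rpart q))\<^sup>2 * (\<Sum>b\<in>UNIV. momentum grr gsr gss (rpart q) w (Inr b) * constraint A (rpart q) w b)"
proof -
  have "(1 / f (rpart q)) * (\<Sum>b\<in>UNIV. pd (calL grr gsr gss V f q) w (Inr b) * phiw A f q w b)
     = (f (rpart q))\<^sup>2 * (\<Sum>b\<in>UNIV. momentum grr gsr gss (rpart q) w (Inr b) * constraint A (rpart q) w b)"
    using f_nonzero
    by (simp add: pd_calL_velocity phiw_def phi_eq_constraint constraint_scaleR sum_distrib_left
                  power2_eq_square mult_ac)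
  then show ?thesis by (simp add: LV_def calL_eq_kinetic)
qed

lemma pd_LV_velocity:
  "pd (LV grr gsr gss V A f q) w I = (f (rpart q))\<^sup>2 * (momentum grr gsr gss (rpart q) w I
     - (\<Sum>b\<in>UNIV. momentum grr gsr gss (rpart q) (axis I 1) (Inr b) * constraint A (rpart q) w b
                 + momentum grr gsr gss (rpart q) w (Inr b) * constraint A (rpart q) (axis I 1) b))"
proof (rule pd_eqI)
  let ?r = "rpart q"
  have "((\<lambda>h. \<Sum>b\<in>UNIV. momentum grr gsr gss ?r (w + h *\<^sub>R axis I 1) (Inr b)
                         * constraint A ?r (w + h *\<^sub>R axis I 1) b)
     has_real_derivative (\<Sum>b\<in>UNIV. momentum grr gsr gss ?r (axis I 1) (Inr b) * constraint A ?r w b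
                   + momentum grr gsr gss ?r w (Inr b) * constraint A ?r (axis I 1) b)) (at 0)"
    unfolding momentum_add momentum_scaleR constraint_add constraint_scaleR
    by (auto intro!: derivative_eq_intros simp: algebra_simps)
  from DERIV_diff[OF DERIV_diff[OF DERIV_cmult[OF has_real_derivative_kinetic_velocity] DERIV_const]
                     DERIV_cmult[OF this]]
  show "((\<lambda>h. LV grr gsr gss V A f q (w + h *\<^sub>R axis I 1)) has_real_derivative (f ?r)\<^sup>2 *
     (momentum grr gsr gss ?r w I
      - (\<Sum>b\<in>UNIV. momentum grr gsr gss ?r (axis I 1) (Inr b) * constraint A ?r w b
                   + momentum grr gsr gss ?r w (Inr b) * constraint A ?r (axis I 1) b))) (at 0)"
    unfolding LV_eq_kinetic by (simp add: algebra_simps)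
qed

lemma pd_LV_velocity_Inr:
  "pd (LV grr gsr gss V A f x) w (Inr a)
     = - ((f (rpart x))\<^sup>2 * (\<Sum>b\<in>UNIV. gss (rpart x) a b * constraint A (rpart x) w b))"
  by (simp add: pd_LV_velocity momentum_axis_Inr constraint_axis_Inr delta_simps sum.distrib
                gss_sym[of _ _ a] algebra_simps)

lemma pd_lc:
  "pd (lc grr gsr gss V A r) u \<alpha> = reduced_momentum grr gsr gss A r (horizontal_lift A r u) \<alpha>"
proof (rule pd_eqI)
  let ?h = "horizontal_lift A r"
  have "lc grr gsr gss V A r (u + h *\<^sub>R axis \<alpha> 1) = kinetic grr gsr gss r (?h u + h *\<^sub>R ?h (axis \<alpha> 1)) - V r" for h
    by (simp add: lc_eq_kinetic linear_add[OF linear_horizontal_lift] linear_scale[OF linear_horizontal_lift])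
  moreover have "(\<Sum>I\<in>UNIV. momentum grr gsr gss r (?h u) I * ?h (axis \<alpha> 1) $ I)
      = reduced_momentum grr gsr gss A r (?h u) \<alpha>"
    by (simp add: sum_UNIV_Plus delta_simps reduced_momentum_def sum_negf algebra_simps)
  moreover have "((\<lambda>h. kinetic grr gsr gss r (?h u + h *\<^sub>R ?h (axis \<alpha> 1))) has_real_derivative
      (\<Sum>I\<in>UNIV. momentum grr gsr gss r (?h u) I * ?h (axis \<alpha> 1) $ I)) (at 0)"
    by (rule has_real_derivative_kinetic_line) (simp_all add: grr_sym gss_sym)
  ultimately show "((\<lambda>h. lc grr gsr gss V A r (u + h *\<^sub>R axis \<alpha> 1)) has_real_derivative
      reduced_momentum grr gsr gss A r (?h u) \<alpha>) (at 0)"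
    by (simp add: DERIV_diff[where E=0, simplified])
qed

lemma Gmat_eq:
  "Gmat grr gsr gss V A r $ \<alpha> $ \<beta> = reduced_momentum grr gsr gss A r (horizontal_lift A r (axis \<beta> 1)) \<alpha>"
proof -
  have "pd (\<lambda>u. pd (lc grr gsr gss V A r) u \<alpha>) 0 \<beta>
      = reduced_momentum grr gsr gss A r (horizontal_lift A r (axis \<beta> 1)) \<alpha>"
    by (rule pd_eqI)
       (auto simp: pd_lc linear_scale[OF linear_horizontal_lift] linear_scale[OF linear_reduced_momentum]
             intro!: derivative_eq_intros)
  then show ?thesis by (simp add: Gmat_def)
qed

lemma Gmat_mult_sum:
  "(\<Sum>\<beta>\<in>UNIV. Gmat grr gsr gss V A r $ \<alpha> $ \<beta> * u $ \<beta>) = reduced_momentum grr gsr gss A r (horizontal_lift A r u) \<alpha>"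
proof -
  let ?h = "horizontal_lift A r" and ?p = "\<lambda>v. reduced_momentum grr gsr gss A r v \<alpha>"
  have "?h u = ?h (\<Sum>\<beta>\<in>UNIV. u $ \<beta> *\<^sub>R axis \<beta> 1)"
    using basis_expansion[of u] by (simp add: scalar_mult_eq_scaleR)
  also have "\<dots> = (\<Sum>\<beta>\<in>UNIV. u $ \<beta> *\<^sub>R ?h (axis \<beta> 1))"
    by (simp add: linear_sum[OF linear_horizontal_lift] linear_scale[OF linear_horizontal_lift] o_def)
  finally have "?p (?h u) = (\<Sum>\<beta>\<in>UNIV. u $ \<beta> * ?p (?h (axis \<beta> 1)))"
    by (simp add: linear_sum[OF linear_reduced_momentum] linear_scale[OF linear_reduced_momentum])
  then show ?thesis by (simp add: Gmat_eq mult.commute)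
qed

lemma Gmat_quadratic_form:
  "(\<Sum>\<alpha>\<in>UNIV. \<Sum>\<beta>\<in>UNIV. Gmat grr gsr gss V A r $ \<alpha> $ \<beta> * u $ \<alpha> * u $ \<beta>)
     = 2 * kinetic grr gsr gss r (horizontal_lift A r u)"
proof -
  let ?h = "horizontal_lift A r u"
  have "(\<Sum>\<alpha>\<in>UNIV. \<Sum>\<beta>\<in>UNIV. Gmat grr gsr gss V A r $ \<alpha> $ \<beta> * u $ \<alpha> * u $ \<beta>)
      = (\<Sum>\<alpha>\<in>UNIV. u $ \<alpha> * reduced_momentum grr gsr gss A r ?h \<alpha>)"
    by (simp add: Gmat_mult_sum[symmetric] sum_distrib_left mult_ac)
  also have "\<dots> = (\<Sum>I\<in>UNIV. momentum grr gsr gss r ?h I * ?h $ I)"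
  proof -
    have "(\<Sum>\<alpha>\<in>UNIV. u $ \<alpha> * (\<Sum>b\<in>UNIV. A r b \<alpha> * momentum grr gsr gss r ?h (Inr b)))
        = (\<Sum>b\<in>UNIV. momentum grr gsr gss r ?h (Inr b) * (\<Sum>\<beta>\<in>UNIV. A r b \<beta> * u $ \<beta>))"
      unfolding sum_distrib_left sum_distrib_right by (subst sum.swap) (simp add: mult_ac)
    then show ?thesis
      by (simp add: sum_UNIV_Plus reduced_momentum_def right_diff_distrib sum_subtractf sum_negf
                    mult.commute)
  qed
  also have "\<dots> = 2 * kinetic grr gsr gss r ?h"
    by (rule kinetic_euler) (simp_all add: grr_sym gss_sym)
  finally show ?thesis .
qed

lemmas has_real_derivative_coefficients =
  has_real_derivative_pd[OF grr_differentiable] has_real_derivative_pd[OF gsr_differentiable]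
  has_real_derivative_pd[OF gss_differentiable] has_real_derivative_pd[OF A_differentiable]
  has_real_derivative_pd[OF V_differentiable] has_real_derivative_pd[OF f_differentiable]

lemma has_real_derivative_kinetic_position:
  "((\<lambda>h. kinetic grr gsr gss (r + h *\<^sub>R axis \<alpha> 1) v) has_real_derivative kinetic_dr grr gsr gss r \<alpha> v) (at 0)"
  unfolding kinetic_def kinetic_dr_def
  by (intro derivative_eq_intros; (rule has_real_derivative_coefficients)?) auto

lemma has_real_derivative_constraint_position:
  "((\<lambda>h. constraint A (r + h *\<^sub>R axis \<alpha> 1) v b) has_real_derivative constraint_dr A r \<alpha> v b) (at 0)"
  unfolding constraint_def constraint_dr_def
  by (intro derivative_eq_intros; (rule has_real_derivative_coefficients)?) auto

lemma differentiable_momentum_position: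
  "(\<lambda>h. momentum grr gsr gss (r + h *\<^sub>R axis \<alpha> 1) v I) differentiable (at 0)"
proof -
  have "(\<lambda>h. c (r + h *\<^sub>R axis \<alpha> 1)) differentiable (at 0)"
    if "\<And>y. c differentiable (at y)" for c :: "real^'m \<Rightarrow> real"
    using has_real_derivative_pd[OF that] real_differentiable_def by blast
  note coefficients = this[OF grr_differentiable] this[OF gsr_differentiable] this[OF gss_differentiable]
  show ?thesis unfolding momentum_def
    by (cases I) (simp_all add: coefficients)
qed

lemma pd_mechL_position_Inl:
  "pd (\<lambda>x. mechL grr gsr gss V x v) x (Inl \<alpha>) = kinetic_dr grr gsr gss (rpart x) \<alpha> v - pd V (rpart x) \<alpha>"
  unfolding mechL_eq_kinetic
  by (rule pd_eqI) (simp add: rpart_add_axis_Inl DERIV_diff has_real_derivative_kinetic_position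
                              has_real_derivative_coefficients)

lemma pd_LV_position_Inl:
  assumes "\<And>b. constraint A (rpart x) w b = 0"
  shows "pd (\<lambda>x. LV grr gsr gss V A f x w) x (Inl \<alpha>) =
     2 * f (rpart x) * pd f (rpart x) \<alpha> * kinetic grr gsr gss (rpart x) w
     + (f (rpart x))\<^sup>2 * kinetic_dr grr gsr gss (rpart x) \<alpha> w - pd V (rpart x) \<alpha>
     - (f (rpart x))\<^sup>2 * (\<Sum>b\<in>UNIV. momentum grr gsr gss (rpart x) w (Inr b) * constraint_dr A (rpart x) \<alpha> w b)"
proof (rule pd_eqI)
  let ?r = "rpart x" and ?rh = "\<lambda>h. rpart x + h *\<^sub>R axis \<alpha> 1"
  have f2: "((\<lambda>h. (f (?rh h))\<^sup>2) has_real_derivative 2 * f ?r * pd f ?r \<alpha>) (at 0)"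
    by (intro derivative_eq_intros; (rule has_real_derivative_coefficients)?) auto
  have "((\<lambda>h. \<Sum>b\<in>UNIV. momentum grr gsr gss (?rh h) w (Inr b) * constraint A (?rh h) w b)
     has_real_derivative (\<Sum>b\<in>UNIV. momentum grr gsr gss ?r w (Inr b) * constraint_dr A ?r \<alpha> w b)) (at 0)"
  proof (intro DERIV_sum)
    fix b
    obtain D where "((\<lambda>h. momentum grr gsr gss (?rh h) w (Inr b)) has_real_derivative D) (at 0)"
      using differentiable_momentum_position real_differentiable_def by blast
    from DERIV_mult[OF this has_real_derivative_constraint_position[of ?r \<alpha> w b]]
    show "((\<lambda>h. momentum grr gsr gss (?rh h) w (Inr b) * constraint A (?rh h) w b)
        has_real_derivative momentum grr gsr gss ?r w (Inr b) * constraint_dr A ?r \<alpha> w b) (at 0)"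
      by (simp add: assms mult.commute)
  qed
  from DERIV_diff[OF DERIV_diff[OF DERIV_mult[OF f2 has_real_derivative_kinetic_position[of ?r \<alpha> w]]
        has_real_derivative_coefficients(5)[of ?r \<alpha>]] DERIV_mult[OF f2 this]]
  show "((\<lambda>h. LV grr gsr gss V A f (x + h *\<^sub>R axis (Inl \<alpha>) 1) w) has_real_derivative
     2 * f ?r * pd f ?r \<alpha> * kinetic grr gsr gss ?r w + (f ?r)\<^sup>2 * kinetic_dr grr gsr gss ?r \<alpha> w
     - pd V ?r \<alpha> - (f ?r)\<^sup>2 * (\<Sum>b\<in>UNIV. momentum grr gsr gss ?r w (Inr b) * constraint_dr A ?r \<alpha> w b)) (at 0)"
    by (simp add: LV_eq_kinetic rpart_add_axis_Inl assms algebra_simps)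
qed

lemma pd_LV_velocity_Inl:
  assumes "\<And>b. constraint A (rpart x) w b = 0"
  shows "pd (LV grr gsr gss V A f x) w (Inl \<alpha>)
     = f (rpart x) * reduced_momentum grr gsr gss A (rpart x) (f (rpart x) *\<^sub>R w) \<alpha>"
  by (simp add: pd_LV_velocity assms momentum_axis_Inl constraint_axis_Inl reduced_momentum_def
                momentum_scaleR sum_distrib_left power2_eq_square algebra_simps)

lemma Kten_Gmat_contract:
  assumes "invertible (Gmat grr gsr gss V A r)"
  shows "(\<Sum>\<mu>\<in>UNIV. Kten grr gsr gss V A r \<mu> \<alpha> \<delta> * Gmat grr gsr gss V A r $ \<mu> $ \<nu>)
       = (\<Sum>b\<in>UNIV. Mmat gsr gss A r b \<nu> * Bcurv A r b \<alpha> \<delta>)"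
  unfolding Kten_def
  by (rule sum_matrix_inverse_contract[where Gi="\<lambda>\<epsilon> \<mu>. matrix_inv (Gmat grr gsr gss V A r) $ \<epsilon> $ \<mu>"
        and G="\<lambda>\<mu> \<nu>. Gmat grr gsr gss V A r $ \<mu> $ \<nu>", OF matrix_inv_left_sum[OF assms]])

lemma momentum_curvature_identity:
  assumes G_inv: "invertible (Gmat grr gsr gss V A r)"
    and f_eq: "\<And>\<nu> \<delta>.
        pd f r \<delta> * Gmat grr gsr gss V A r $ \<alpha> $ \<nu>
      + pd f r \<nu> * Gmat grr gsr gss V A r $ \<alpha> $ \<delta>
      - 2 * pd f r \<alpha> * Gmat grr gsr gss V A r $ \<delta> $ \<nu>
      = f r * (\<Sum>\<mu>\<in>UNIV. Kten grr gsr gss V A r \<mu> \<alpha> \<delta> * Gmat grr gsr gss V A r $ \<mu> $ \<nu>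
                   + Kten grr gsr gss V A r \<mu> \<alpha> \<nu> * Gmat grr gsr gss V A r $ \<mu> $ \<delta>)"
    and v: "\<And>b. constraint A r v b = 0"
  shows "(\<Sum>\<beta>\<in>UNIV. pd f r \<beta> * v $ Inl \<beta>) * reduced_momentum grr gsr gss A r v \<alpha>
           - pd f r \<alpha> * (2 * kinetic grr gsr gss r v)
       = f r * (\<Sum>b\<in>UNIV. momentum grr gsr gss r v (Inr b) * (\<Sum>\<delta>\<in>UNIV. Bcurv A r b \<alpha> \<delta> * v $ Inl \<delta>))"
proof -
  have "horizontal_lift A r (rpart v) = v"
    by (rule horizontal_lift_rpart[OF v])
  moreover note quadratic_contraction[where G="\<lambda>\<mu> \<nu>. Gmat grr gsr gss V A r $ \<mu> $ \<nu>" and c="f r"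
      and K="Kten grr gsr gss V A r" and M="Mmat gsr gss A r" and B="\<lambda>b. Bcurv A r b \<alpha>"
      and u="\<lambda>\<beta>. v $ Inl \<beta>", OF f_eq Kten_Gmat_contract[OF G_inv]]
  ultimately show ?thesis
    using Gmat_mult_sum[of r \<alpha> "rpart v"] Gmat_quadratic_form[of r "rpart v"]
      momentum_Inr_horizontal_lift[where grr=grr and A=A and r=r and u="rpart v"]
    by simp
qed

end

section \<open>Motions of L_V\<close>

locale LV_motion = chaplygin_system +
  fixes T :: "real set" and t0 :: real and q \<omega> :: "real \<Rightarrow> real^('m::finite + 'k::finite)"
  assumes T_open: "open T" and T_interval: "is_interval T" and t0_in_T: "t0 \<in> T"
    and q_velocity: "\<And>t. t \<in> T \<Longrightarrow> (q has_vector_derivative (f (rpart (q t)) *\<^sub>R \<omega> t)) (at t)"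
    and \<omega>_differentiable: "\<And>t. t \<in> T \<Longrightarrow> \<omega> differentiable (at t)"
    and LV_equations: "\<And>t I. t \<in> T \<Longrightarrow>
        ((\<lambda>\<tau>. pd (LV grr gsr gss V A f (q \<tau>)) (\<omega> \<tau>) I) has_real_derivative
           f (rpart (q t)) * pd (\<lambda>x. LV grr gsr gss V A f x (\<omega> t)) (q t) I) (at t)"
    and initial_constraints: "\<And>a. phiw A f (q t0) (\<omega> t0) a = 0"
    and gtilde_invertible: "\<And>x. invertible (gtilde grr gsr gss V f x)"
begin

lemma vector_derivative_q: "t \<in> T \<Longrightarrow> vector_derivative q (at t) = f (rpart (q t)) *\<^sub>R \<omega> t"
  using vector_derivative_at[OF q_velocity] .

lemma has_vector_derivative_q: "t \<in> T \<Longrightarrow> (q has_vector_derivative vector_derivative q (at t)) (at t)"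
  using q_velocity vector_derivative_q by simp

lemma pd_LV_velocity_Inr_constant:
  assumes "t \<in> T"
  shows "pd (LV grr gsr gss V A f (q t)) (\<omega> t) (Inr a) = pd (LV grr gsr gss V A f (q t0)) (\<omega> t0) (Inr a)"
proof -
  have "((\<lambda>\<tau>. pd (LV grr gsr gss V A f (q \<tau>)) (\<omega> \<tau>) (Inr a)) has_real_derivative 0) (at \<tau>)" if "\<tau> \<in> T" for \<tau>
    using LV_equations[OF that, of "Inr a"] by (simp add: pd_LV_position_Inr)
  then have "\<exists>k. \<forall>\<tau>\<in>T. pd (LV grr gsr gss V A f (q \<tau>)) (\<omega> \<tau>) (Inr a) = k"
    by (intro has_field_derivative_zero_constant[OF is_interval_convex[OF T_interval]])
       (rule has_field_derivative_at_within)
  then obtain k where "\<forall>\<tau>\<in>T. pd (LV grr gsr gss V A f (q \<tau>)) (\<omega> \<tau>) (Inr a) = k" ..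
  with assms t0_in_T show ?thesis by simp
qed

lemma constraint_preserved:
  assumes "t \<in> T"
  shows "constraint A (rpart (q t)) (\<omega> t) b = 0"
proof -
  let ?r = "rpart (q t)" and ?c = "f (rpart (q t))"
  define \<phi> where "\<phi> = (\<chi> b. constraint A ?r (\<omega> t) b)"
  have "constraint A (rpart (q t0)) (\<omega> t0) b = 0" for b
    using initial_constraints[of b] f_nonzero by (simp add: phiw_def phi_eq_constraint constraint_scaleR)
  then have "?c\<^sup>2 * (\<Sum>b\<in>UNIV. gss ?r a b * constraint A ?r (\<omega> t) b) = 0" for a
    using pd_LV_velocity_Inr_constant[OF assms, of a] by (simp add: pd_LV_velocity_Inr)
  then have "gtilde grr gsr gss V f (q t) *v \<phi> = gtilde grr gsr gss V f (q t) *v 0"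
    by (simp add: vec_eq_iff matrix_vector_mult_def gtilde_eq \<phi>_def sum_distrib_left[symmetric] mult.assoc)
  then have "\<phi> = 0"
    using inj_matrix_vector_mult[OF gtilde_invertible] by (meson injD)
  then show ?thesis by (simp add: \<phi>_def vec_eq_iff)
qed

lemma constraint_velocity: "t \<in> T \<Longrightarrow> constraint A (rpart (q t)) (vector_derivative q (at t)) b = 0"
  by (simp add: vector_derivative_q constraint_scaleR constraint_preserved)

definition motion_momentum :: "'m + 'k \<Rightarrow> real \<Rightarrow> real" where
  "motion_momentum I \<tau> = pd (mechL grr gsr gss V (q \<tau>)) (vector_derivative q (at \<tau>)) I"

lemma motion_momentum_eq:
  "motion_momentum I \<tau> = momentum grr gsr gss (rpart (q \<tau>)) (vector_derivative q (at \<tau>)) I"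
  by (simp add: motion_momentum_def pd_mechL_velocity)

lemma motion_momentum_on_T:
  "\<tau> \<in> T \<Longrightarrow> motion_momentum I \<tau> = f (rpart (q \<tau>)) * momentum grr gsr gss (rpart (q \<tau>)) (\<omega> \<tau>) I"
  by (simp add: motion_momentum_eq vector_derivative_q momentum_scaleR)

lemma has_real_derivative_along_q:
  "t \<in> T \<Longrightarrow> (\<And>y. c differentiable (at y)) \<Longrightarrow>
   ((\<lambda>\<tau>. c (rpart (q \<tau>))) has_real_derivative
      (\<Sum>\<beta>\<in>UNIV. pd c (rpart (q t)) \<beta> * vector_derivative q (at t) $ Inl \<beta>)) (at t)"
  by (rule has_real_derivative_comp_rpart[OF _ has_vector_derivative_q])

lemma motion_momentum_differentiable:
  assumes t: "t \<in> T"
  shows "motion_momentum I differentiable (at t)"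
proof -
  have "(\<lambda>\<tau>. c (rpart (q \<tau>))) differentiable (at t)" if "\<And>y. c differentiable (at y)" for c :: "real^'m \<Rightarrow> real"
    using has_real_derivative_along_q[OF t that] real_differentiable_def by blast
  note coefficients = this[OF f_differentiable] this[OF grr_differentiable] this[OF gsr_differentiable]
    this[OF gss_differentiable]
  have "(\<lambda>\<tau>. \<omega> \<tau> $ j) differentiable (at t)" for j
    using differentiable_compose[OF bounded_linear_imp_differentiable[OF bounded_linear_vec_nth]
        \<omega>_differentiable[OF t]] by (simp add: o_def)
  then have "(\<lambda>\<tau>. f (rpart (q \<tau>)) * momentum grr gsr gss (rpart (q \<tau>)) (\<omega> \<tau>) I) differentiable (at t)"
    unfolding momentum_def by (cases I) (simp_all add: coefficients)
  then obtain D where "((\<lambda>\<tau>. f (rpart (q \<tau>)) * momentum grr gsr gss (rpart (q \<tau>)) (\<omega> \<tau>) I)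
      has_real_derivative D) (at t)"
    using real_differentiable_def by blast
  then have "(motion_momentum I has_real_derivative D) (at t)"
    by (rule has_field_derivative_transform_within_open[OF _ T_open t]) (simp add: motion_momentum_on_T)
  then show ?thesis using real_differentiable_def by blast
qed


lemma has_real_derivative_pd_LV_Inl:
  assumes t: "t \<in> T"
  defines "r \<equiv> rpart (q t)" and "v \<equiv> vector_derivative q (at t)"
  shows "((\<lambda>\<tau>. pd (LV grr gsr gss V A f (q \<tau>)) (\<omega> \<tau>) (Inl \<alpha>)) has_real_derivative
      (\<Sum>\<beta>\<in>UNIV. pd f r \<beta> * v $ Inl \<beta>) * reduced_momentum grr gsr gss A r v \<alpha>
      + f r * (deriv (motion_momentum (Inl \<alpha>)) t
          - (\<Sum>b\<in>UNIV. (\<Sum>\<beta>\<in>UNIV. pd (\<lambda>x. A x b \<alpha>) r \<beta> * v $ Inl \<beta>) * momentum grr gsr gss r v (Inr b)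
                       + A r b \<alpha> * deriv (motion_momentum (Inr b)) t))) (at t)"
proof -
  let ?p = motion_momentum
  have p: "(?p I has_real_derivative deriv (?p I) t) (at t)" for I
    using motion_momentum_differentiable[OF t] DERIV_deriv_iff_real_differentiable by blast
  have "((\<lambda>\<tau>. \<Sum>b\<in>UNIV. A (rpart (q \<tau>)) b \<alpha> * ?p (Inr b) \<tau>) has_real_derivative
      (\<Sum>b\<in>UNIV. (\<Sum>\<beta>\<in>UNIV. pd (\<lambda>x. A x b \<alpha>) r \<beta> * v $ Inl \<beta>) * ?p (Inr b) t
                 + A r b \<alpha> * deriv (?p (Inr b)) t)) (at t)"
    unfolding r_def v_def
    by (intro DERIV_sum)
       (rule DERIV_cong[OF DERIV_mult[OF has_real_derivative_along_q[OF t A_differentiable] p]],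
        simp add: mult.commute)
  from DERIV_mult[OF has_real_derivative_along_q[OF t f_differentiable] DERIV_diff[OF p this]]
  have "((\<lambda>\<tau>. f (rpart (q \<tau>)) * (?p (Inl \<alpha>) \<tau> - (\<Sum>b\<in>UNIV. A (rpart (q \<tau>)) b \<alpha> * ?p (Inr b) \<tau>)))
      has_real_derivative
      (\<Sum>\<beta>\<in>UNIV. pd f r \<beta> * v $ Inl \<beta>) * reduced_momentum grr gsr gss A r v \<alpha>
      + f r * (deriv (?p (Inl \<alpha>)) t
          - (\<Sum>b\<in>UNIV. (\<Sum>\<beta>\<in>UNIV. pd (\<lambda>x. A x b \<alpha>) r \<beta> * v $ Inl \<beta>) * momentum grr gsr gss r v (Inr b)
                       + A r b \<alpha> * deriv (?p (Inr b)) t))) (at t)"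
    by (simp add: r_def v_def motion_momentum_eq reduced_momentum_def algebra_simps)
  then show ?thesis
  proof (rule has_field_derivative_transform_within_open[OF _ T_open t])
    fix \<tau> assume "\<tau> \<in> T"
    then show "f (rpart (q \<tau>)) * (?p (Inl \<alpha>) \<tau> - (\<Sum>b\<in>UNIV. A (rpart (q \<tau>)) b \<alpha> * ?p (Inr b) \<tau>))
        = pd (LV grr gsr gss V A f (q \<tau>)) (\<omega> \<tau>) (Inl \<alpha>)"
      by (simp add: pd_LV_velocity_Inl constraint_preserved motion_momentum_eq vector_derivative_q
                    reduced_momentum_def)
  qed
qed

lemma LV_equation_Inl:
  assumes t: "t \<in> T"
  defines "r \<equiv> rpart (q t)" and "v \<equiv> vector_derivative q (at t)"
  shows "(\<Sum>\<beta>\<in>UNIV. pd f r \<beta> * v $ Inl \<beta>) * reduced_momentum grr gsr gss A r v \<alpha>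
      + f r * (deriv (motion_momentum (Inl \<alpha>)) t
          - (\<Sum>b\<in>UNIV. (\<Sum>\<beta>\<in>UNIV. pd (\<lambda>x. A x b \<alpha>) r \<beta> * v $ Inl \<beta>) * momentum grr gsr gss r v (Inr b)
                       + A r b \<alpha> * deriv (motion_momentum (Inr b)) t))
    = 2 * pd f r \<alpha> * kinetic grr gsr gss r v + f r * kinetic_dr grr gsr gss r \<alpha> v - f r * pd V r \<alpha>
      - f r * (\<Sum>b\<in>UNIV. momentum grr gsr gss r v (Inr b) * constraint_dr A r \<alpha> v b)"
proof -
  have v: "v = f r *\<^sub>R \<omega> t"
    by (simp add: v_def r_def vector_derivative_q[OF t])
  have "(\<Sum>b\<in>UNIV. momentum grr gsr gss r v (Inr b) * constraint_dr A r \<alpha> v b)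
      = (f r)\<^sup>2 * (\<Sum>b\<in>UNIV. momentum grr gsr gss r (\<omega> t) (Inr b) * constraint_dr A r \<alpha> (\<omega> t) b)"
    by (simp add: v momentum_scaleR constraint_dr_scaleR sum_distrib_left power2_eq_square mult_ac)
  moreover have "(\<Sum>\<beta>\<in>UNIV. pd f r \<beta> * v $ Inl \<beta>) * reduced_momentum grr gsr gss A r v \<alpha>
      + f r * (deriv (motion_momentum (Inl \<alpha>)) t
          - (\<Sum>b\<in>UNIV. (\<Sum>\<beta>\<in>UNIV. pd (\<lambda>x. A x b \<alpha>) r \<beta> * v $ Inl \<beta>) * momentum grr gsr gss r v (Inr b)
                       + A r b \<alpha> * deriv (motion_momentum (Inr b)) t))
    = f r * pd (\<lambda>x. LV grr gsr gss V A f x (\<omega> t)) (q t) (Inl \<alpha>)"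
    using DERIV_unique[OF has_real_derivative_pd_LV_Inl[OF t, of \<alpha>] LV_equations[OF t, of "Inl \<alpha>"]]
    unfolding r_def v_def .
  moreover note pd_LV_position_Inl[OF constraint_preserved[OF t], of \<alpha>]
  ultimately show ?thesis
    by (simp add: r_def[symmetric] v kinetic_scaleR
                  kinetic_dr_scaleR power2_eq_square algebra_simps)
qed

lemma lagrange_dalembert_equation:
  assumes G_inv: "\<And>r. invertible (Gmat grr gsr gss V A r)"
    and f_eq: "\<And>r \<alpha> \<nu> \<delta>.
        pd f r \<delta> * Gmat grr gsr gss V A r $ \<alpha> $ \<nu>
      + pd f r \<nu> * Gmat grr gsr gss V A r $ \<alpha> $ \<delta>
      - 2 * pd f r \<alpha> * Gmat grr gsr gss V A r $ \<delta> $ \<nu>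
      = f r * (\<Sum>\<mu>\<in>UNIV. Kten grr gsr gss V A r \<mu> \<alpha> \<delta> * Gmat grr gsr gss V A r $ \<mu> $ \<nu>
                   + Kten grr gsr gss V A r \<mu> \<alpha> \<nu> * Gmat grr gsr gss V A r $ \<mu> $ \<delta>)"
    and t: "t \<in> T"
  defines "v \<equiv> vector_derivative q (at t)"
  shows "(deriv (motion_momentum (Inl \<alpha>)) t - pd (\<lambda>x. mechL grr gsr gss V x v) (q t) (Inl \<alpha>))
       - (\<Sum>a\<in>UNIV. A (rpart (q t)) a \<alpha> *
            (deriv (motion_momentum (Inr a)) t - pd (\<lambda>x. mechL grr gsr gss V x v) (q t) (Inr a))) = 0"
proof -
  let ?r = "rpart (q t)"
  let ?dA = "\<lambda>b. \<Sum>\<beta>\<in>UNIV. pd (\<lambda>x. A x b \<alpha>) ?r \<beta> * v $ Inl \<beta>"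
  let ?pb = "\<lambda>b. momentum grr gsr gss ?r v (Inr b)"
  have curvature: "(\<Sum>\<delta>\<in>UNIV. Bcurv A ?r b \<alpha> \<delta> * v $ Inl \<delta>) = ?dA b - constraint_dr A ?r \<alpha> v b" for b
    by (simp add: Bcurv_def constraint_dr_def left_diff_distrib sum_subtractf)
  have "(\<Sum>\<beta>\<in>UNIV. pd f ?r \<beta> * v $ Inl \<beta>) * reduced_momentum grr gsr gss A ?r v \<alpha>
      - pd f ?r \<alpha> * (2 * kinetic grr gsr gss ?r v)
      = f ?r * (\<Sum>b\<in>UNIV. ?pb b * (?dA b - constraint_dr A ?r \<alpha> v b))"
    using momentum_curvature_identity[OF G_inv f_eq constraint_velocity[OF t], of \<alpha>]
    by (simp only: v_def[symmetric] curvature)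
  also have "\<dots> = f ?r * ((\<Sum>b\<in>UNIV. ?dA b * ?pb b) - (\<Sum>b\<in>UNIV. ?pb b * constraint_dr A ?r \<alpha> v b))"
    by (simp add: right_diff_distrib sum_subtractf mult.commute)
  finally have identity: "(\<Sum>\<beta>\<in>UNIV. pd f ?r \<beta> * v $ Inl \<beta>) * reduced_momentum grr gsr gss A ?r v \<alpha>
      - pd f ?r \<alpha> * (2 * kinetic grr gsr gss ?r v)
      = f ?r * ((\<Sum>b\<in>UNIV. ?dA b * ?pb b) - (\<Sum>b\<in>UNIV. ?pb b * constraint_dr A ?r \<alpha> v b))" .
  have "f ?r * ((deriv (motion_momentum (Inl \<alpha>)) t - (kinetic_dr grr gsr gss ?r \<alpha> v - pd V ?r \<alpha>))
       - (\<Sum>a\<in>UNIV. A ?r a \<alpha> * deriv (motion_momentum (Inr a)) t)) = 0"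
    using LV_equation_Inl[OF t, of \<alpha>] identity
    by (simp add: v_def[symmetric] sum.distrib algebra_simps)
  with f_nonzero show ?thesis
    by (simp add: pd_mechL_position_Inl pd_mechL_position_Inr)
qed

end

lemma smooth_fun_differentiable: "smooth_fun G \<Longrightarrow> G differentiable (at y)"
  unfolding smooth_fun_def by (metis Ck.simps(2) One_nat_def)

theorem theorem7:
  fixes grr :: "real^'m::finite \<Rightarrow> 'm \<Rightarrow> 'm \<Rightarrow> real"
    and gsr :: "real^'m \<Rightarrow> 'k::finite \<Rightarrow> 'm \<Rightarrow> real"
    and gss :: "real^'m \<Rightarrow> 'k \<Rightarrow> 'k \<Rightarrow> real"
    and V :: "real^'m \<Rightarrow> real"
    and A :: "real^'m \<Rightarrow> 'k \<Rightarrow> 'm \<Rightarrow> real"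
    and f :: "real^'m \<Rightarrow> real"
    and T :: "real set" and t0 :: real
    and q :: "real \<Rightarrow> real^('m + 'k)" and \<omega> :: "real \<Rightarrow> real^('m + 'k)"
  assumes grr_sym: "\<And>r \<alpha> \<beta>. grr r \<alpha> \<beta> = grr r \<beta> \<alpha>"
    and gss_sym: "\<And>r a b. gss r a b = gss r b a"
    and smooth_grr: "\<And>\<alpha> \<beta>. smooth_fun (\<lambda>r. grr r \<alpha> \<beta>)"
    and smooth_gsr: "\<And>a \<alpha>. smooth_fun (\<lambda>r. gsr r a \<alpha>)"
    and smooth_gss: "\<And>a b. smooth_fun (\<lambda>r. gss r a b)"
    and smooth_V: "smooth_fun V"
    and smooth_A: "\<And>a \<alpha>. smooth_fun (\<lambda>r. A r a \<alpha>)"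
    and G_inv: "\<And>r. invertible (Gmat grr gsr gss V A r)"
    and f_C1: "Ck 1 f"
    and f_nz: "\<And>r. f r \<noteq> 0"
    and f_eq: "\<And>r \<alpha> \<nu> \<delta>.
        pd f r \<delta> * Gmat grr gsr gss V A r $ \<alpha> $ \<nu>
      + pd f r \<nu> * Gmat grr gsr gss V A r $ \<alpha> $ \<delta>
      - 2 * pd f r \<alpha> * Gmat grr gsr gss V A r $ \<delta> $ \<nu>
      = f r * (\<Sum>\<mu>\<in>UNIV. Kten grr gsr gss V A r \<mu> \<alpha> \<delta> * Gmat grr gsr gss V A r $ \<mu> $ \<nu>
                   + Kten grr gsr gss V A r \<mu> \<alpha> \<nu> * Gmat grr gsr gss V A r $ \<mu> $ \<delta>)"
    and gtilde_inv: "\<And>x. invertible (gtilde grr gsr gss V f x)"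
    and T_open: "open T" and T_int: "is_interval T" and t0_T: "t0 \<in> T"
    and q_vel: "\<And>t. t \<in> T \<Longrightarrow>
        (q has_vector_derivative (f (rpart (q t)) *\<^sub>R \<omega> t)) (at t)"
    and \<omega>_diff: "\<And>t. t \<in> T \<Longrightarrow> \<omega> differentiable (at t)"
    and LV_eqs: "\<And>t I. t \<in> T \<Longrightarrow>
        ((\<lambda>\<tau>. pd (LV grr gsr gss V A f (q \<tau>)) (\<omega> \<tau>) I) has_real_derivative
           f (rpart (q t)) * pd (\<lambda>x. LV grr gsr gss V A f x (\<omega> t)) (q t) I) (at t)"
    and init: "\<And>a. phiw A f (q t0) (\<omega> t0) a = 0"
  shows "\<forall>t\<in>T.
      (\<forall>a. phi A (q t) (vector_derivative q (at t)) a = 0)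
    \<and> (\<forall>I. (\<lambda>\<tau>. pd (mechL grr gsr gss V (q \<tau>)) (vector_derivative q (at \<tau>)) I)
             differentiable (at t))
    \<and> (\<forall>\<alpha>.
        (deriv (\<lambda>\<tau>. pd (mechL grr gsr gss V (q \<tau>)) (vector_derivative q (at \<tau>)) (Inl \<alpha>)) t
          - pd (\<lambda>x. mechL grr gsr gss V x (vector_derivative q (at t))) (q t) (Inl \<alpha>))
      - (\<Sum>a\<in>UNIV. A (rpart (q t)) a \<alpha> *
          (deriv (\<lambda>\<tau>. pd (mechL grr gsr gss V (q \<tau>)) (vector_derivative q (at \<tau>)) (Inr a)) t
            - pd (\<lambda>x. mechL grr gsr gss V x (vector_derivative q (at t))) (q t) (Inr a)))
      = 0)"
proof -
  interpret LV_motion grr gsr gss V A f T t0 q \<omega>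
    by unfold_locales
       (use grr_sym gss_sym f_nz T_open T_int t0_T q_vel \<omega>_diff LV_eqs init gtilde_inv f_C1 in
        \<open>auto intro: smooth_fun_differentiable smooth_grr smooth_gsr smooth_gss smooth_V smooth_A\<close>)
  show ?thesis
    using constraint_velocity motion_momentum_differentiable lagrange_dalembert_equation[OF G_inv f_eq]
    by (simp add: phi_eq_constraint motion_momentum_def[abs_def])
qed

end
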